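(* Let $G$ be a finite group, $\xi$ a linear character of $G$, and $\varepsilon$ either the trivial or the sign character of $S_2$. Let $SG_2=G\wr S_2$ and $HG_1=\{(g,g;\sigma)\mid g\in G,\sigma\in S_2\}\subset SG_2$, and let $\xi\otimes\varepsilon$ be the linear character $(g,g;\sigma)\mapsto\xi(g)\varepsilon(\sigma)$ of $HG_1$. Then $(\xi\otimes\varepsilon)\uparrow_{HG_1}^{SG_2}$ is multiplicity-free, i.e. $(SG_2,HG_1,\xi\otimes\varepsilon)$ is a Gelfand triple.
   Context: $G\wr S_2=\{(g_1,g_2;\sigma)\mid g_i\in G,\sigma\in S_2\}$ with multiplication $(g_1,g_2;\sigma)(h_1,h_2;\tau)=(g_1h_{\sigma^{-1}(1)},g_2h_{\sigma^{-1}(2)};\sigma\tau)$. A Gelfand triple $(G,H,\phi)$ means the induced representation $\phi\uparrow_H^G$ is multiplicity-free. *)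

theory Defs
  imports "HOL-Algebra.Sym_Groups" "Jordan_Normal_Form.Matrix"
begin

text \<open>Wreath product G wr S_2, with S_2 = sym_group 2 (permutations of {1,2}).
  Elements (g1, g2, sigma); h_i is selected by the index i in {1,2}.\<close>

definition coord2 :: "'a \<times> 'a \<Rightarrow> nat \<Rightarrow> 'a" where
  "coord2 p i = (if i = 1 then fst p else snd p)"

definition wreath2 :: "('a, 'b) monoid_scheme \<Rightarrow> ('a \<times> 'a \<times> (nat \<Rightarrow> nat)) monoid" where
  "wreath2 G = \<lparr> carrier = {(g1, g2, s). g1 \<in> carrier G \<and> g2 \<in> carrier G \<and> s \<in> carrier (sym_group 2)},
     mult = (\<lambda>(g1, g2, s) (h1, h2, t).
        (g1 \<otimes>\<^bsub>G\<^esub> coord2 (h1, h2) (Hilbert_Choice.inv s 1), g2 \<otimes>\<^bsub>G\<^esub> coord2 (h1, h2) (Hilbert_Choice.inv s 2), s \<circ> t)),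
     one = (\<one>\<^bsub>G\<^esub>, \<one>\<^bsub>G\<^esub>, id) \<rparr>"

definition diag_wreath2 :: "('a, 'b) monoid_scheme \<Rightarrow> ('a \<times> 'a \<times> (nat \<Rightarrow> nat)) set" where
  "diag_wreath2 G = {(g, g, s) | g s. g \<in> carrier G \<and> s \<in> carrier (sym_group 2)}"

definition linear_char :: "('a, 'b) monoid_scheme \<Rightarrow> ('a \<Rightarrow> complex) \<Rightarrow> bool" where
  "linear_char G \<xi> \<longleftrightarrow> (\<forall>x\<in>carrier G. \<xi> x \<noteq> 0) \<and>
     (\<forall>x\<in>carrier G. \<forall>y\<in>carrier G. \<xi> (x \<otimes>\<^bsub>G\<^esub> y) = \<xi> x * \<xi> y)"

definition tensor_char :: "('a \<Rightarrow> complex) \<Rightarrow> ((nat \<Rightarrow> nat) \<Rightarrow> complex) \<Rightarrow> ('a \<times> 'a \<times> (nat \<Rightarrow> nat)) \<Rightarrow> complex" where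
  "tensor_char \<xi> \<epsilon> x = (case x of (g, _, s) \<Rightarrow> \<xi> g * \<epsilon> s)"

definition mat_rep :: "('g, 'b) monoid_scheme \<Rightarrow> nat \<Rightarrow> ('g \<Rightarrow> complex mat) \<Rightarrow> bool" where
  "mat_rep G n \<rho> \<longleftrightarrow> (\<forall>g\<in>carrier G. \<rho> g \<in> carrier_mat n n) \<and> \<rho> \<one>\<^bsub>G\<^esub> = 1\<^sub>m n \<and>
     (\<forall>g\<in>carrier G. \<forall>h\<in>carrier G. \<rho> (g \<otimes>\<^bsub>G\<^esub> h) = \<rho> g * \<rho> h)"

definition subspace_vec :: "nat \<Rightarrow> complex vec set \<Rightarrow> bool" where
  "subspace_vec n U \<longleftrightarrow> U \<subseteq> carrier_vec n \<and> 0\<^sub>v n \<in> U \<and>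
     (\<forall>u\<in>U. \<forall>w\<in>U. u + w \<in> U) \<and> (\<forall>c. \<forall>u\<in>U. c \<cdot>\<^sub>v u \<in> U)"

definition irred_rep :: "('g, 'b) monoid_scheme \<Rightarrow> nat \<Rightarrow> ('g \<Rightarrow> complex mat) \<Rightarrow> bool" where
  "irred_rep G n \<rho> \<longleftrightarrow> mat_rep G n \<rho> \<and> n > 0 \<and>
     (\<forall>U. subspace_vec n U \<and> (\<forall>g\<in>carrier G. \<forall>u\<in>U. \<rho> g *\<^sub>v u \<in> U)
          \<longrightarrow> U = {0\<^sub>v n} \<or> U = carrier_vec n)"

text \<open>Model of the induced representation phi ind_H^G: functions f on G with
  f(h x) = phi(h) f(x) for h in H, zero outside G; G acts by (g.f)(x) = f(x g).\<close>
definition ind_space :: "('g, 'b) monoid_scheme \<Rightarrow> 'g set \<Rightarrow> ('g \<Rightarrow> complex) \<Rightarrow> ('g \<Rightarrow> complex) set" where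
  "ind_space G H \<phi> = {f. (\<forall>h\<in>H. \<forall>x\<in>carrier G. f (h \<otimes>\<^bsub>G\<^esub> x) = \<phi> h * f x) \<and>
                          (\<forall>x. x \<notin> carrier G \<longrightarrow> f x = 0)}"

definition intertwiner :: "('g, 'b) monoid_scheme \<Rightarrow> 'g set \<Rightarrow> ('g \<Rightarrow> complex) \<Rightarrow> nat \<Rightarrow> ('g \<Rightarrow> complex mat)
    \<Rightarrow> (complex vec \<Rightarrow> 'g \<Rightarrow> complex) \<Rightarrow> bool" where
  "intertwiner G H \<phi> n \<rho> T \<longleftrightarrow>
     (\<forall>v\<in>carrier_vec n. T v \<in> ind_space G H \<phi>) \<and>
     (\<forall>v\<in>carrier_vec n. \<forall>w\<in>carrier_vec n. T (v + w) = (\<lambda>x. T v x + T w x)) \<and>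
     (\<forall>c. \<forall>v\<in>carrier_vec n. T (c \<cdot>\<^sub>v v) = (\<lambda>x. c * T v x)) \<and>
     (\<forall>g\<in>carrier G. \<forall>v\<in>carrier_vec n. T (\<rho> g *\<^sub>v v) = (\<lambda>x. T v (x \<otimes>\<^bsub>G\<^esub> g)))"

text \<open>Multiplicity-free: for every irreducible representation W, dim Hom_G(W, Ind) \<le> 1,
  i.e. any two intertwiners are linearly dependent.\<close>
definition gelfand_triple :: "('g, 'b) monoid_scheme \<Rightarrow> 'g set \<Rightarrow> ('g \<Rightarrow> complex) \<Rightarrow> bool" where
  "gelfand_triple G H \<phi> \<longleftrightarrow>
     (\<forall>n \<rho> T1 T2. irred_rep G n \<rho> \<and> intertwiner G H \<phi> n \<rho> T1 \<and> intertwiner G H \<phi> n \<rho> T2 \<longrightarrow>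
        (\<exists>c. \<forall>v\<in>carrier_vec n. T1 v = (\<lambda>x. c * T2 v x)) \<or>
        (\<exists>c. \<forall>v\<in>carrier_vec n. T2 v = (\<lambda>x. c * T1 v x)))"

end

theory Submission
  imports Defs "Jordan_Normal_Form.Schur_Decomposition"
begin

text \<open>Gelfand's trick, twisted. Put \<open>W = G \<wr> S\<^sub>2\<close>, \<open>H = HG\<^sub>1\<close>, \<open>\<phi> = \<xi> \<otimes> \<epsilon>\<close> and
  \<open>s = (1, 1; (1 2))\<close>. The anti-automorphism \<open>\<tau> x = s x\<inverse> s\<close> of \<open>W\<close> maps every \<open>w\<close> into its own
  double coset, \<open>\<tau> w = h\<^sub>1 w h\<^sub>2\<close> with \<open>\<phi>(h\<^sub>1)\<inverse> \<phi>(h\<^sub>2)\<inverse> = \<psi> w\<close> for the character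
  \<open>\<psi>(a, b; \<sigma>) = \<xi> a \<xi> b\<close>. Hence on \<open>(H, \<phi>)\<close>-bi-equivariant functions \<open>f \<circ> \<tau> = \<psi> f\<close>, and since
  \<open>\<tau>\<close> reverses convolution products, the Hecke algebra of such functions is commutative.
  For an irreducible \<open>\<rho>\<close>, intertwiners into the induced module correspond to functionals \<open>l\<close>
  with \<open>l \<circ> \<rho> h = \<phi> h \<cdot> l\<close>; the Hecke algebra acts on them by commuting operators, so
  they share an eigenvector, and irreducibility of \<open>\<rho>\<close> then forces all such functionals to be
  proportional.\<close>

lemma linear_char_one:
  assumes "group G" "linear_char G \<xi>"
  shows "\<xi> \<one>\<^bsub>G\<^esub> = 1"
proof -
  interpret G: group G by fact
  have "\<xi> \<one>\<^bsub>G\<^esub> = \<xi> \<one>\<^bsub>G\<^esub> * \<xi> \<one>\<^bsub>G\<^esub>"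
    using assms(2) unfolding linear_char_def by (metis G.l_one G.one_closed)
  moreover have "\<xi> \<one>\<^bsub>G\<^esub> \<noteq> 0" using assms(2) unfolding linear_char_def by blast
  ultimately show ?thesis by (metis mult_cancel_right1)
qed

lemma linear_char_inv:
  assumes "group G" "linear_char G \<xi>" "g \<in> carrier G"
  shows "\<xi> (inv\<^bsub>G\<^esub> g) * \<xi> g = 1"
proof -
  interpret G: group G by fact
  have "\<xi> (inv\<^bsub>G\<^esub> g \<otimes>\<^bsub>G\<^esub> g) = \<xi> (inv\<^bsub>G\<^esub> g) * \<xi> g"
    using assms(2,3) G.inv_closed unfolding linear_char_def by blast
  then show ?thesis using assms(3) linear_char_one[OF assms(1,2)] by simp
qed

lemma eq_vec_if_scalar_prod_eq:
  fixes a b :: "'a :: comm_ring_1 vec"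
  assumes "a \<in> carrier_vec n" "b \<in> carrier_vec n"
    and "\<And>v. v \<in> carrier_vec n \<Longrightarrow> a \<bullet> v = b \<bullet> v"
  shows "a = b"
proof (rule eq_vecI)
  fix i assume "i < dim_vec b"
  then have i: "i < n" using assms(2) by simp
  have "a \<bullet> unit_vec n i = b \<bullet> unit_vec n i" using assms(3)[of "unit_vec n i"] by simp
  then show "a $ i = b $ i" using i by simp
qed (use assms in simp)

lemma linear_functional_eq_scalar_prod:
  fixes f :: "complex vec \<Rightarrow> complex"
  assumes add: "\<And>v w. v \<in> carrier_vec n \<Longrightarrow> w \<in> carrier_vec n \<Longrightarrow> f (v + w) = f v + f w"
    and smult: "\<And>c v. v \<in> carrier_vec n \<Longrightarrow> f (c \<cdot>\<^sub>v v) = c * f v"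
    and v: "v \<in> carrier_vec n"
  shows "f v = vec n (\<lambda>i. f (unit_vec n i)) \<bullet> v"
proof -
  define prefix where "prefix k = vec n (\<lambda>i. if i < k then v $ i else 0)" for k
  have prefix_carrier: "prefix k \<in> carrier_vec n" for k unfolding prefix_def by simp
  have "(0 :: complex) \<cdot>\<^sub>v 0\<^sub>v n = 0\<^sub>v n" by (intro eq_vecI) auto
  then have f_zero: "f (0\<^sub>v n) = 0" using smult[of "0\<^sub>v n" 0] by simp
  have f_prefix: "k \<le> n \<Longrightarrow> f (prefix k) = (\<Sum>i<k. v $ i * f (unit_vec n i))" for k
  proof (induction k)
    case 0
    have "prefix 0 = 0\<^sub>v n" unfolding prefix_def by (intro eq_vecI) auto
    then show ?case using f_zero by simp
  next
    case (Suc k)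
    have "prefix (Suc k) = prefix k + v $ k \<cdot>\<^sub>v unit_vec n k"
      unfolding prefix_def by (intro eq_vecI) (auto simp: unit_vec_def less_Suc_eq)
    then show ?case
      using Suc add[OF prefix_carrier, of "v $ k \<cdot>\<^sub>v unit_vec n k" k] smult[of "unit_vec n k" "v $ k"]
      by simp
  qed
  have "prefix n = v" unfolding prefix_def using v by (intro eq_vecI) auto
  then have "f v = (\<Sum>i<n. v $ i * f (unit_vec n i))" using f_prefix[of n] by simp
  also have "\<dots> = vec n (\<lambda>i. f (unit_vec n i)) \<bullet> v"
    unfolding scalar_prod_def using v by (intro sum.cong) auto
  finally show ?thesis .
qed

lemma pow_mat_Suc_left:
  assumes "A \<in> carrier_mat n n"
  shows "A ^\<^sub>m Suc k = A * A ^\<^sub>m k"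
proof (induction k)
  case (Suc k)
  have "A ^\<^sub>m Suc (Suc k) = (A * A ^\<^sub>m k) * A" using Suc by simp
  also have "\<dots> = A * (A ^\<^sub>m k * A)" using assms by (simp add: assoc_mult_mat[of _ n n _ n _ n])
  finally show ?case by simp
qed (use assms in simp)

lemma strictly_upper_triangular_pow:
  fixes B :: "'a :: comm_ring_1 mat"
  assumes B: "B \<in> carrier_mat n n"
    and strict: "\<And>i j. i < n \<Longrightarrow> j < n \<Longrightarrow> j \<le> i \<Longrightarrow> B $$ (i, j) = 0"
  shows "i < n \<Longrightarrow> j < n \<Longrightarrow> j < i + k \<Longrightarrow> (B ^\<^sub>m k) $$ (i, j) = 0"
proof (induction k arbitrary: i j)
  case (Suc k)
  have Bk: "B ^\<^sub>m k \<in> carrier_mat n n" using B by simp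
  have "(B ^\<^sub>m Suc k) $$ (i, j) = (\<Sum>l<n. (B ^\<^sub>m k) $$ (i, l) * B $$ (l, j))"
    using Suc.prems Bk B by (auto simp: scalar_prod_def lessThan_atLeast0 intro!: sum.cong)
  also have "\<dots> = 0"
  proof (rule sum.neutral, rule ballI)
    fix l assume "l \<in> {..<n}"
    then show "(B ^\<^sub>m k) $$ (i, l) * B $$ (l, j) = 0"
      using Suc.IH[of i l] strict[of l j] Suc.prems by (cases "l < i + k") auto
  qed
  finally show ?case .
qed (use B in simp)

text \<open>The nilpotent case arises when all eigenvalues vanish: the Schur form is then strictly upper
  triangular.\<close>

lemma nonzero_eigenvalue_or_nilpotent:
  fixes A :: "complex mat"
  assumes A: "A \<in> carrier_mat n n"
  shows "(\<exists>e v. e \<noteq> 0 \<and> eigenvector A v e) \<or> A ^\<^sub>m n = 0\<^sub>m n n"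
proof -
  obtain as where char_poly: "char_poly A = (\<Prod>a\<leftarrow>as. [:- a, 1:])" and len: "length as = n"
    using char_poly_factorized[OF A] by blast
  obtain B P Q where schur: "schur_decomposition A as = (B, P, Q)"
    by (cases "schur_decomposition A as") auto
  from schur_decomposition[OF A char_poly schur]
  have sim: "similar_mat_wit A B P Q" and ut: "upper_triangular B" and diag: "diag_mat B = as"
    by auto
  note dims = similar_mat_witD2[OF A sim]
  show ?thesis
  proof (cases "\<exists>a\<in>set as. a \<noteq> 0")
    case True
    then obtain a where a: "a \<in> set as" "a \<noteq> 0" by blast
    have "poly (char_poly A) a = 0" unfolding char_poly using a(1) by (rule linear_poly_root)
    then have "eigenvalue A a" using eigenvalue_root_char_poly[OF A] by simp
    then show ?thesis using a(2) unfolding eigenvalue_def by blast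
  next
    case False
    have "B $$ (i, i) = 0" if i: "i < n" for i
    proof -
      have "diag_mat B ! i = B $$ (i, i)" using dims(5) i by (simp add: diag_mat_def)
      moreover have "diag_mat B ! i \<in> set as" using diag len i by (metis nth_mem)
      ultimately show ?thesis using False by auto
    qed
    then have "B $$ (i, j) = 0" if "i < n" "j < n" "j \<le> i" for i j
      using ut dims(5) that unfolding upper_triangular_def by (cases "j = i") auto
    then have "B ^\<^sub>m n = 0\<^sub>m n n"
      by (intro eq_matI) (use dims(5) strictly_upper_triangular_pow[OF dims(5)] in auto)
    then have "A ^\<^sub>m n = P * 0\<^sub>m n n * Q" using similar_mat_wit_pow_id[OF sim] by simp
    also have "\<dots> = 0\<^sub>m n n" using dims(6,7) by simp
    finally show ?thesis by blast
  qed
qed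

lemma eigenvector_in_superset_of_range:
  fixes A :: "complex mat"
  assumes A: "A \<in> carrier_mat n n"
    and L: "L \<subseteq> carrier_vec n" "\<And>c l. l \<in> L \<Longrightarrow> c \<cdot>\<^sub>v l \<in> L"
    and range: "\<And>v. v \<in> carrier_vec n \<Longrightarrow> A *\<^sub>v v \<in> L"
    and l: "l \<in> L" "l \<noteq> 0\<^sub>v n"
  shows "\<exists>w\<in>L. w \<noteq> 0\<^sub>v n \<and> (\<exists>e. A *\<^sub>v w = e \<cdot>\<^sub>v w)"
  using nonzero_eigenvalue_or_nilpotent[OF A]
proof
  assume "\<exists>e v. e \<noteq> 0 \<and> eigenvector A v e"
  then obtain e w where "e \<noteq> 0" "eigenvector A w e" by blast
  then have w: "w \<in> carrier_vec n" "w \<noteq> 0\<^sub>v n" "A *\<^sub>v w = e \<cdot>\<^sub>v w" and "w = (1 / e) \<cdot>\<^sub>v (A *\<^sub>v w)"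
    using A by (auto simp: eigenvector_def smult_smult_assoc)
  then have "w \<in> L" using L(2) range by metis
  then show ?thesis using w by blast
next
  assume nilpotent: "A ^\<^sub>m n = 0\<^sub>m n n"
  txt \<open>Take the last nonzero vector \<open>w = A\<^sup>j l\<close> of the sequence \<open>l, A l, A\<^sup>2 l, \<dots>\<close>.\<close>
  have l_carrier: "l \<in> carrier_vec n" using L(1) l(1) by blast
  define k where "k = (LEAST k. A ^\<^sub>m k *\<^sub>v l = 0\<^sub>v n)"
  have "A ^\<^sub>m n *\<^sub>v l = 0\<^sub>v n" unfolding nilpotent using l_carrier by (intro eq_vecI) auto
  then have Ak: "A ^\<^sub>m k *\<^sub>v l = 0\<^sub>v n" unfolding k_def by (rule LeastI)
  then have "k \<noteq> 0" using l A l_carrier by (auto simp: k_def)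
  then obtain j where j: "k = Suc j" using not0_implies_Suc by blast
  define w where "w = A ^\<^sub>m j *\<^sub>v l"
  have w_carrier: "w \<in> carrier_vec n"
    unfolding w_def using mult_mat_vec_carrier[OF pow_carrier_mat[OF A, of j] l_carrier] .
  have "j < (LEAST k. A ^\<^sub>m k *\<^sub>v l = 0\<^sub>v n)" using j k_def by simp
  then have w_nonzero: "w \<noteq> 0\<^sub>v n" unfolding w_def by (rule not_less_Least)
  have "w \<in> L"
  proof (cases j)
    case (Suc i)
    have "w = A *\<^sub>v (A ^\<^sub>m i *\<^sub>v l)"
      unfolding w_def Suc pow_mat_Suc_left[OF A]
      using assoc_mult_mat_vec[OF A pow_carrier_mat[OF A, of i] l_carrier] by simp
    then show ?thesis
      using range mult_mat_vec_carrier[OF pow_carrier_mat[OF A, of i] l_carrier] by simp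
  qed (use l w_def A l_carrier in simp)
  moreover have "A *\<^sub>v w = 0 \<cdot>\<^sub>v w"
  proof -
    have "A *\<^sub>v w = A ^\<^sub>m k *\<^sub>v l"
      unfolding w_def j pow_mat_Suc_left[OF A]
      using assoc_mult_mat_vec[OF A pow_carrier_mat[OF A, of j] l_carrier] by simp
    then show ?thesis using Ak A w_carrier by (auto intro!: eq_vecI)
  qed
  ultimately show ?thesis using w_nonzero by blast
qed

section \<open>Gelfand's trick for a twisted anti-involution\<close>

lemma (in group) bij_betw_mult_left_subgroup:
  assumes "subgroup H G" "a \<in> H"
  shows "bij_betw (\<lambda>x. a \<otimes> x) H H"
proof -
  interpret H: subgroup H G by fact
  show ?thesis
    by (rule bij_betwI[where g="\<lambda>x. inv a \<otimes> x"]) (use assms(2) in \<open>auto simp: m_assoc[symmetric]\<close>)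
qed

lemma (in group) bij_betw_mult_right_subgroup:
  assumes "subgroup H G" "a \<in> H"
  shows "bij_betw (\<lambda>x. x \<otimes> a) H H"
proof -
  interpret H: subgroup H G by fact
  show ?thesis
    by (rule bij_betwI[where g="\<lambda>x. x \<otimes> inv a"]) (use assms(2) in \<open>auto simp: m_assoc\<close>)
qed

lemma (in group) inv_mult_cancel_left: "a \<in> carrier G \<Longrightarrow> z \<in> carrier G \<Longrightarrow> inv a \<otimes> (a \<otimes> z) = z"
  by (simp add: m_assoc[symmetric])

lemma (in group) mult_inv_cancel_left: "a \<in> carrier G \<Longrightarrow> z \<in> carrier G \<Longrightarrow> a \<otimes> (inv a \<otimes> z) = z"
  by (simp add: m_assoc[symmetric])

lemma (in group) bij_betw_mult_left:
  "a \<in> carrier G \<Longrightarrow> bij_betw (\<lambda>x. a \<otimes> x) (carrier G) (carrier G)"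
  using bij_betw_mult_left_subgroup[OF subgroup_self] .

locale gelfand_trick = group W for W (structure) +
  fixes H :: "'a set" and \<phi> :: "'a \<Rightarrow> complex" and \<psi> :: "'a \<Rightarrow> complex" and s :: 'a
  assumes finite_carrier: "finite (carrier W)"
    and subgroup: "subgroup H W"
    and linear_char_\<phi>: "linear_char (W\<lparr>carrier := H\<rparr>) \<phi>"
    and linear_char_\<psi>: "linear_char W \<psi>"
    and s_carrier: "s \<in> carrier W"
    and s_involution: "s \<otimes> s = \<one>"
    and anti_inv_in_double_coset: "\<And>w. w \<in> carrier W \<Longrightarrow> \<exists>h1\<in>H. \<exists>h2\<in>H.
      s \<otimes> inv w \<otimes> s = h1 \<otimes> w \<otimes> h2 \<and> \<phi> (inv h1) * \<phi> (inv h2) = \<psi> w"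
begin

lemma subgroup_carrier: "h \<in> H \<Longrightarrow> h \<in> carrier W"
  using subgroup.subset[OF subgroup] by blast

lemma finite_subgroup: "finite H"
  using finite_subset[OF subgroup.subset[OF subgroup] finite_carrier] .

lemma card_subgroup_pos: "card H > 0"
  using finite_subgroup subgroup.one_closed[OF subgroup] by (auto simp: card_gt_0_iff)

lemma \<phi>_mult: "a \<in> H \<Longrightarrow> b \<in> H \<Longrightarrow> \<phi> (a \<otimes> b) = \<phi> a * \<phi> b"
  using linear_char_\<phi> unfolding linear_char_def by simp

lemma \<phi>_one: "\<phi> \<one> = 1"
  using linear_char_one[OF subgroup_imp_group[OF subgroup] linear_char_\<phi>] by simp

lemma \<phi>_inv: "h \<in> H \<Longrightarrow> \<phi> (inv h) * \<phi> h = 1"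
  using linear_char_inv[OF subgroup_imp_group[OF subgroup] linear_char_\<phi>, of h]
  by (simp add: m_inv_consistent[OF subgroup])

lemma \<phi>_inv_mult: "a \<in> H \<Longrightarrow> b \<in> H \<Longrightarrow> \<phi> (inv (a \<otimes> b)) = \<phi> (inv a) * \<phi> (inv b)"
  using \<phi>_mult[of "inv b" "inv a"] subgroup.m_inv_closed[OF subgroup]
  by (simp add: inv_mult_group subgroup_carrier mult.commute)

lemma \<psi>_mult: "a \<in> carrier W \<Longrightarrow> b \<in> carrier W \<Longrightarrow> \<psi> (a \<otimes> b) = \<psi> a * \<psi> b"
  using linear_char_\<psi> unfolding linear_char_def by simp

lemma \<psi>_nonzero: "a \<in> carrier W \<Longrightarrow> \<psi> a \<noteq> 0"
  using linear_char_\<psi> unfolding linear_char_def by simp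

definition anti_inv :: "'a \<Rightarrow> 'a" where
  "anti_inv x = s \<otimes> inv x \<otimes> s"

lemma anti_inv_carrier: "x \<in> carrier W \<Longrightarrow> anti_inv x \<in> carrier W"
  using s_carrier by (simp add: anti_inv_def)

lemma inv_s: "inv s = s"
  using s_carrier s_involution by (simp add: inv_equality)

lemma inv_anti_inv: "x \<in> carrier W \<Longrightarrow> inv (anti_inv x) = s \<otimes> x \<otimes> s"
  using s_carrier unfolding anti_inv_def by (simp add: inv_mult_group inv_s m_assoc)

lemma anti_inv_anti_inv:
  assumes x: "x \<in> carrier W"
  shows "anti_inv (anti_inv x) = x"
proof -
  have "anti_inv (anti_inv x) = s \<otimes> (s \<otimes> x \<otimes> s) \<otimes> s"
    unfolding anti_inv_def[of "anti_inv x"] inv_anti_inv[OF x] ..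
  also have "\<dots> = (s \<otimes> s) \<otimes> x \<otimes> (s \<otimes> s)"
    using s_carrier x by (simp add: m_assoc)
  finally show ?thesis using s_involution x by simp
qed

lemma bij_betw_anti_inv: "bij_betw anti_inv (carrier W) (carrier W)"
  by (rule bij_betwI[where g=anti_inv]) (auto simp: anti_inv_carrier anti_inv_anti_inv)

lemma anti_inv_mult_inv:
  assumes "x \<in> carrier W" "z \<in> carrier W"
  shows "inv (anti_inv z) \<otimes> anti_inv x = anti_inv (x \<otimes> inv z)"
proof -
  have "inv (anti_inv z) \<otimes> anti_inv x = s \<otimes> z \<otimes> (s \<otimes> s) \<otimes> inv x \<otimes> s"
    unfolding inv_anti_inv[OF assms(2)] unfolding anti_inv_def using assms s_carrier by (simp add: m_assoc)
  also have "\<dots> = s \<otimes> (z \<otimes> inv x) \<otimes> s"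
    using assms s_carrier by (simp add: s_involution m_assoc)
  also have "\<dots> = anti_inv (x \<otimes> inv z)" using assms by (simp add: anti_inv_def inv_mult_group)
  finally show ?thesis .
qed

definition bi_equivariant :: "('a \<Rightarrow> complex) \<Rightarrow> bool" where
  "bi_equivariant f \<longleftrightarrow>
    (\<forall>a\<in>H. \<forall>b\<in>H. \<forall>w\<in>carrier W. f (a \<otimes> w \<otimes> b) = \<phi> (inv a) * \<phi> (inv b) * f w)"

lemma bi_equivariant_anti_inv:
  assumes "bi_equivariant f" "w \<in> carrier W"
  shows "f (anti_inv w) = \<psi> w * f w"
proof -
  obtain h1 h2 where h: "h1 \<in> H" "h2 \<in> H" "anti_inv w = h1 \<otimes> w \<otimes> h2"
    "\<phi> (inv h1) * \<phi> (inv h2) = \<psi> w"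
    using anti_inv_in_double_coset[OF assms(2)] unfolding anti_inv_def by blast
  then show ?thesis using assms unfolding bi_equivariant_def by simp
qed

lemma bi_equivariant_left:
  assumes "bi_equivariant f" "a \<in> H" "w \<in> carrier W"
  shows "f (a \<otimes> w) = \<phi> (inv a) * f w"
proof -
  have "f (a \<otimes> w \<otimes> \<one>) = \<phi> (inv a) * \<phi> (inv \<one>) * f w"
    using assms subgroup.one_closed[OF subgroup] unfolding bi_equivariant_def by blast
  then show ?thesis
    using assms subgroup_carrier \<phi>_one by simp
qed

lemma bi_equivariant_right:
  assumes "bi_equivariant f" "b \<in> H" "w \<in> carrier W"
  shows "f (w \<otimes> b) = \<phi> (inv b) * f w"
proof -
  have "f (\<one> \<otimes> w \<otimes> b) = \<phi> (inv \<one>) * \<phi> (inv b) * f w"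
    using assms subgroup.one_closed[OF subgroup] unfolding bi_equivariant_def by blast
  then show ?thesis
    using assms subgroup_carrier \<phi>_one by simp
qed

definition conv :: "('a \<Rightarrow> complex) \<Rightarrow> ('a \<Rightarrow> complex) \<Rightarrow> 'a \<Rightarrow> complex" where
  "conv f g x = (\<Sum>y\<in>carrier W. f y * g (inv y \<otimes> x))"

lemma bi_equivariant_conv:
  assumes f: "bi_equivariant f" and g: "bi_equivariant g"
  shows "bi_equivariant (conv f g)"
  unfolding bi_equivariant_def
proof (intro ballI)
  fix a b w assume a: "a \<in> H" and b: "b \<in> H" and w: "w \<in> carrier W"
  have a_carrier: "a \<in> carrier W" and b_carrier: "b \<in> carrier W" using a b subgroup_carrier by auto
  have "conv f g (a \<otimes> w \<otimes> b) = (\<Sum>y\<in>carrier W. f (a \<otimes> y) * g (inv (a \<otimes> y) \<otimes> (a \<otimes> w \<otimes> b)))"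
    unfolding conv_def by (rule sum.reindex_bij_betw[OF bij_betw_mult_left[OF a_carrier], symmetric])
  also have "\<dots> = (\<Sum>y\<in>carrier W. \<phi> (inv a) * \<phi> (inv b) * (f y * g (inv y \<otimes> w)))"
  proof (rule sum.cong[OF refl])
    fix y assume y: "y \<in> carrier W"
    have "inv (a \<otimes> y) \<otimes> (a \<otimes> w \<otimes> b) = (inv y \<otimes> w) \<otimes> b"
      using a_carrier b_carrier y w by (simp add: inv_mult_group m_assoc inv_mult_cancel_left)
    then show "f (a \<otimes> y) * g (inv (a \<otimes> y) \<otimes> (a \<otimes> w \<otimes> b)) =
        \<phi> (inv a) * \<phi> (inv b) * (f y * g (inv y \<otimes> w))"
      using bi_equivariant_left[OF f a y] bi_equivariant_right[OF g b] y w by simp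
  qed
  also have "\<dots> = \<phi> (inv a) * \<phi> (inv b) * conv f g w"
    unfolding conv_def by (simp add: sum_distrib_left)
  finally show "conv f g (a \<otimes> w \<otimes> b) = \<phi> (inv a) * \<phi> (inv b) * conv f g w" .
qed

lemma sum_mult_inv_swap:
  fixes f g :: "'a \<Rightarrow> complex"
  assumes "x \<in> carrier W"
  shows "(\<Sum>z\<in>carrier W. f z * g (x \<otimes> inv z)) = (\<Sum>y\<in>carrier W. g y * f (inv y \<otimes> x))"
proof -
  have "bij_betw (\<lambda>y. inv y \<otimes> x) (carrier W) (carrier W)"
  proof (rule bij_betwI[where g="\<lambda>z. x \<otimes> inv z"])
    fix y assume "y \<in> carrier W"
    then show "x \<otimes> inv (inv y \<otimes> x) = y" using assms by (simp add: inv_mult_group m_assoc[symmetric])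
  next
    fix z assume "z \<in> carrier W"
    then show "inv (x \<otimes> inv z) \<otimes> x = z" using assms by (simp add: inv_mult_group m_assoc)
  qed (use assms in auto)
  then have "(\<Sum>z\<in>carrier W. f z * g (x \<otimes> inv z))
      = (\<Sum>y\<in>carrier W. f (inv y \<otimes> x) * g (x \<otimes> inv (inv y \<otimes> x)))"
    by (rule sum.reindex_bij_betw[symmetric])
  also have "\<dots> = (\<Sum>y\<in>carrier W. g y * f (inv y \<otimes> x))"
    by (rule sum.cong[OF refl]) (use assms in \<open>simp add: inv_mult_group m_assoc[symmetric] mult.commute\<close>)
  finally show ?thesis .
qed

text \<open>Since \<open>anti_inv\<close> reverses products, it maps \<open>f * g\<close> to \<open>g * f\<close>, up to the twist \<open>\<psi>\<close>.\<close>

lemma conv_anti_inv: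
  assumes f: "bi_equivariant f" and g: "bi_equivariant g" and x: "x \<in> carrier W"
  shows "conv f g (anti_inv x) = \<psi> x * conv g f x"
proof -
  have "conv f g (anti_inv x) = (\<Sum>z\<in>carrier W. f (anti_inv z) * g (inv (anti_inv z) \<otimes> anti_inv x))"
    unfolding conv_def by (rule sum.reindex_bij_betw[OF bij_betw_anti_inv, symmetric])
  also have "\<dots> = (\<Sum>z\<in>carrier W. \<psi> x * (f z * g (x \<otimes> inv z)))"
  proof (rule sum.cong[OF refl])
    fix z assume z: "z \<in> carrier W"
    have twist: "\<psi> z * \<psi> (x \<otimes> inv z) = \<psi> x"
      using x z \<psi>_mult linear_char_inv[OF is_group linear_char_\<psi> z] by (simp add: ac_simps)
    show "f (anti_inv z) * g (inv (anti_inv z) \<otimes> anti_inv x) = \<psi> x * (f z * g (x \<otimes> inv z))"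
      using anti_inv_mult_inv[OF x z] bi_equivariant_anti_inv[OF f z]
        bi_equivariant_anti_inv[OF g, of "x \<otimes> inv z"] x z twist
      by (simp add: ac_simps)
  qed
  also have "\<dots> = \<psi> x * conv g f x"
    unfolding conv_def sum_mult_inv_swap[OF x, symmetric] by (simp add: sum_distrib_left)
  finally show ?thesis .
qed

lemma conv_commute:
  assumes f: "bi_equivariant f" and g: "bi_equivariant g" and x: "x \<in> carrier W"
  shows "conv f g x = conv g f x"
proof -
  have "\<psi> x * conv f g x = conv f g (anti_inv x)"
    using bi_equivariant_anti_inv[OF bi_equivariant_conv[OF f g] x] by simp
  also have "\<dots> = \<psi> x * conv g f x" by (rule conv_anti_inv[OF f g x])
  finally show ?thesis using \<psi>_nonzero[OF x] by simp
qed

end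

context gelfand_trick
begin

definition double_coset_fun :: "'a \<Rightarrow> 'a \<Rightarrow> complex" where
  "double_coset_fun y w = (\<Sum>j\<in>H. \<Sum>k\<in>H. if j \<otimes> y \<otimes> k = w then \<phi> (inv j) * \<phi> (inv k) else 0)"

lemma sum_double_coset_fun:
  assumes y: "y \<in> carrier W"
  shows "(\<Sum>w\<in>carrier W. double_coset_fun y w * g w) =
    (\<Sum>j\<in>H. \<Sum>k\<in>H. \<phi> (inv j) * \<phi> (inv k) * g (j \<otimes> y \<otimes> k))"
proof -
  have "(\<Sum>w\<in>carrier W. double_coset_fun y w * g w) = (\<Sum>w\<in>carrier W. \<Sum>j\<in>H. \<Sum>k\<in>H.
      if j \<otimes> y \<otimes> k = w then \<phi> (inv j) * \<phi> (inv k) * g w else 0)"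
    unfolding double_coset_fun_def sum_distrib_right by (intro sum.cong refl) simp
  also have "\<dots> = (\<Sum>j\<in>H. \<Sum>k\<in>H. \<Sum>w\<in>carrier W.
      if j \<otimes> y \<otimes> k = w then \<phi> (inv j) * \<phi> (inv k) * g w else 0)"
    by (subst sum.swap) (subst sum.swap, rule refl)
  also have "\<dots> = (\<Sum>j\<in>H. \<Sum>k\<in>H. \<phi> (inv j) * \<phi> (inv k) * g (j \<otimes> y \<otimes> k))"
    using y subgroup_carrier finite_carrier by (intro sum.cong refl) (simp add: sum.delta)
  finally show ?thesis .
qed

lemma bi_equivariant_double_coset_fun:
  assumes y: "y \<in> carrier W"
  shows "bi_equivariant (double_coset_fun y)"
  unfolding bi_equivariant_def
proof (intro ballI)
  fix a b w assume a: "a \<in> H" and b: "b \<in> H" and w: "w \<in> carrier W"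
  define T where "T j k = (if j \<otimes> y \<otimes> k = a \<otimes> w \<otimes> b then \<phi> (inv j) * \<phi> (inv k) else 0)" for j k
  have "double_coset_fun y (a \<otimes> w \<otimes> b) = (\<Sum>j\<in>H. \<Sum>k\<in>H. T j k)"
    unfolding double_coset_fun_def T_def ..
  also have "\<dots> = (\<Sum>j\<in>H. \<Sum>k\<in>H. T (a \<otimes> j) k)"
    by (rule sum.reindex_bij_betw[OF bij_betw_mult_left_subgroup[OF subgroup a], symmetric])
  also have "\<dots> = (\<Sum>j\<in>H. \<Sum>k\<in>H. T (a \<otimes> j) (k \<otimes> b))"
    by (intro sum.cong refl sum.reindex_bij_betw[OF bij_betw_mult_right_subgroup[OF subgroup b], symmetric])
  also have "\<dots> = (\<Sum>j\<in>H. \<Sum>k\<in>H. \<phi> (inv a) * \<phi> (inv b) *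
      (if j \<otimes> y \<otimes> k = w then \<phi> (inv j) * \<phi> (inv k) else 0))"
  proof (intro sum.cong refl)
    fix j k assume j: "j \<in> H" and k: "k \<in> H"
    have "(a \<otimes> j) \<otimes> y \<otimes> (k \<otimes> b) = a \<otimes> (j \<otimes> y \<otimes> k) \<otimes> b"
      using a b j k y subgroup_carrier by (simp add: m_assoc)
    moreover have "a \<otimes> (j \<otimes> y \<otimes> k) \<otimes> b = a \<otimes> w \<otimes> b \<longleftrightarrow> j \<otimes> y \<otimes> k = w"
      using a b j k y w subgroup_carrier by simp
    ultimately show "T (a \<otimes> j) (k \<otimes> b) = \<phi> (inv a) * \<phi> (inv b) *
        (if j \<otimes> y \<otimes> k = w then \<phi> (inv j) * \<phi> (inv k) else 0)"
      unfolding T_def using \<phi>_inv_mult[OF a j] \<phi>_inv_mult[OF k b] by (simp add: ac_simps)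
  qed
  also have "\<dots> = \<phi> (inv a) * \<phi> (inv b) * double_coset_fun y w"
    unfolding double_coset_fun_def by (simp add: sum_distrib_left)
  finally show "double_coset_fun y (a \<otimes> w \<otimes> b) = \<phi> (inv a) * \<phi> (inv b) * double_coset_fun y w" .
qed

definition left_equivariant :: "('a \<Rightarrow> complex) \<Rightarrow> bool" where
  "left_equivariant F \<longleftrightarrow> (\<forall>h\<in>H. \<forall>z\<in>carrier W. F (h \<otimes> z) = \<phi> h * F z)"

definition hecke_sum :: "('a \<Rightarrow> complex) \<Rightarrow> 'a \<Rightarrow> 'a \<Rightarrow> complex" where
  "hecke_sum F y x = (\<Sum>m\<in>H. \<phi> (inv m) * (\<Sum>h\<in>H. \<phi> (inv h) * F (y \<otimes> m \<otimes> x \<otimes> h)))"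

lemma sum_double_coset_fun_mult_left:
  assumes F: "left_equivariant F" and x: "x \<in> carrier W" and y: "y \<in> carrier W"
  shows "(\<Sum>w\<in>carrier W. double_coset_fun y w * (\<Sum>u\<in>carrier W. double_coset_fun x u * F (w \<otimes> u)))
    = of_nat (card H) * (\<Sum>k\<in>H. \<phi> (inv k) * (\<Sum>u\<in>carrier W. double_coset_fun x u * F (y \<otimes> k \<otimes> u)))"
proof -
  have summand: "\<phi> (inv j) * \<phi> (inv k) * (\<Sum>u\<in>carrier W. double_coset_fun x u * F (j \<otimes> y \<otimes> k \<otimes> u))
      = \<phi> (inv k) * (\<Sum>u\<in>carrier W. double_coset_fun x u * F (y \<otimes> k \<otimes> u))"
    if j: "j \<in> H" and k: "k \<in> H" for j k
  proof -
    have "F (j \<otimes> y \<otimes> k \<otimes> u) = \<phi> j * F (y \<otimes> k \<otimes> u)" if "u \<in> carrier W" for u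
      using F j k y that subgroup_carrier unfolding left_equivariant_def by (simp add: m_assoc)
    then have "\<phi> (inv j) * \<phi> (inv k) * (\<Sum>u\<in>carrier W. double_coset_fun x u * F (j \<otimes> y \<otimes> k \<otimes> u))
        = (\<phi> (inv j) * \<phi> j) * (\<phi> (inv k) * (\<Sum>u\<in>carrier W. double_coset_fun x u * F (y \<otimes> k \<otimes> u)))"
      by (simp add: sum_distrib_left ac_simps)
    then show ?thesis using \<phi>_inv[OF j] by simp
  qed
  have "(\<Sum>w\<in>carrier W. double_coset_fun y w * (\<Sum>u\<in>carrier W. double_coset_fun x u * F (w \<otimes> u)))
      = (\<Sum>j\<in>H. \<Sum>k\<in>H. \<phi> (inv j) * \<phi> (inv k) *
          (\<Sum>u\<in>carrier W. double_coset_fun x u * F (j \<otimes> y \<otimes> k \<otimes> u)))"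
    by (rule sum_double_coset_fun[OF y])
  also have "\<dots> = (\<Sum>j\<in>H. \<Sum>k\<in>H. \<phi> (inv k) * (\<Sum>u\<in>carrier W. double_coset_fun x u * F (y \<otimes> k \<otimes> u)))"
    by (intro sum.cong refl summand)
  finally show ?thesis by simp
qed

lemma sum_double_coset_fun_hecke_sum:
  assumes x: "x \<in> carrier W" and y: "y \<in> carrier W"
  shows "(\<Sum>k\<in>H. \<phi> (inv k) * (\<Sum>u\<in>carrier W. double_coset_fun x u * F (y \<otimes> k \<otimes> u)))
    = of_nat (card H) * hecke_sum F y x"
proof -
  define G where "G m = (\<Sum>h\<in>H. \<phi> (inv h) * F (y \<otimes> m \<otimes> x \<otimes> h))" for m
  have "\<phi> (inv k) * (\<Sum>u\<in>carrier W. double_coset_fun x u * F (y \<otimes> k \<otimes> u))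
      = (\<Sum>j\<in>H. \<phi> (inv (k \<otimes> j)) * G (k \<otimes> j))" if k: "k \<in> H" for k
  proof -
    have "F (y \<otimes> k \<otimes> (j \<otimes> x \<otimes> h)) = F (y \<otimes> (k \<otimes> j) \<otimes> x \<otimes> h)" if "j \<in> H" "h \<in> H" for j h
      using that k x y subgroup_carrier by (simp add: m_assoc)
    then show ?thesis
      unfolding sum_double_coset_fun[OF x] G_def using \<phi>_inv_mult[OF k]
      by (simp add: sum_distrib_left ac_simps)
  qed
  also have "(\<Sum>j\<in>H. \<phi> (inv (k \<otimes> j)) * G (k \<otimes> j)) = (\<Sum>m\<in>H. \<phi> (inv m) * G m)" if "k \<in> H" for k
    by (rule sum.reindex_bij_betw[OF bij_betw_mult_left_subgroup[OF subgroup that]])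
  ultimately show ?thesis unfolding hecke_sum_def G_def by simp
qed

lemma sum_sum_mult_eq_conv:
  "(\<Sum>w\<in>carrier W. f w * (\<Sum>u\<in>carrier W. g u * F (w \<otimes> u))) = (\<Sum>z\<in>carrier W. conv f g z * F z)"
proof -
  have "(\<Sum>u\<in>carrier W. g u * F (w \<otimes> u)) = (\<Sum>z\<in>carrier W. g (inv w \<otimes> z) * F z)"
    if w: "w \<in> carrier W" for w
    using sum.reindex_bij_betw[OF bij_betw_mult_left[OF inv_closed[OF w]], of "\<lambda>u. g u * F (w \<otimes> u)"]
    by (simp add: mult_inv_cancel_left w)
  then have "(\<Sum>w\<in>carrier W. f w * (\<Sum>u\<in>carrier W. g u * F (w \<otimes> u)))
      = (\<Sum>w\<in>carrier W. \<Sum>z\<in>carrier W. f w * g (inv w \<otimes> z) * F z)"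
    by (simp add: sum_distrib_left mult.assoc)
  also have "\<dots> = (\<Sum>z\<in>carrier W. conv f g z * F z)"
    unfolding conv_def by (subst sum.swap) (simp add: sum_distrib_right)
  finally show ?thesis .
qed

lemma hecke_sum_commute:
  assumes F: "left_equivariant F" and x: "x \<in> carrier W" and y: "y \<in> carrier W"
  shows "hecke_sum F y x = hecke_sum F x y"
proof -
  have card: "of_nat (card H) * of_nat (card H) * hecke_sum F y x
      = (\<Sum>z\<in>carrier W. conv (double_coset_fun y) (double_coset_fun x) z * F z)"
    if "x \<in> carrier W" "y \<in> carrier W" for x y
    using sum_double_coset_fun_mult_left[OF F that] sum_double_coset_fun_hecke_sum[OF that]
      sum_sum_mult_eq_conv[of "double_coset_fun y" "double_coset_fun x" F]
    by simp
  have "(\<Sum>z\<in>carrier W. conv (double_coset_fun y) (double_coset_fun x) z * F z)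
      = (\<Sum>z\<in>carrier W. conv (double_coset_fun x) (double_coset_fun y) z * F z)"
    using conv_commute[OF bi_equivariant_double_coset_fun[OF y] bi_equivariant_double_coset_fun[OF x]]
    by simp
  then have "of_nat (card H) * of_nat (card H) * hecke_sum F y x
      = of_nat (card H) * of_nat (card H) * hecke_sum F x y"
    unfolding card[OF x y] card[OF y x] .
  then show ?thesis using card_subgroup_pos by simp
qed

end

section \<open>Irreducible representations\<close>

locale irrep = group W for W (structure) +
  fixes n :: nat and \<rho> :: "'a \<Rightarrow> complex mat"
  assumes irred: "irred_rep W n \<rho>"
begin

lemma rep_carrier: "x \<in> carrier W \<Longrightarrow> \<rho> x \<in> carrier_mat n n"
  using irred unfolding irred_rep_def mat_rep_def by simp

lemma rep_one: "\<rho> \<one> = 1\<^sub>m n"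
  using irred unfolding irred_rep_def mat_rep_def by simp

lemma rep_vec_carrier [simp]: "x \<in> carrier W \<Longrightarrow> v \<in> carrier_vec n \<Longrightarrow> \<rho> x *\<^sub>v v \<in> carrier_vec n"
  using mult_mat_vec_carrier[OF rep_carrier] by blast

lemma rep_mult_vec:
  assumes "x \<in> carrier W" "y \<in> carrier W" "v \<in> carrier_vec n"
  shows "\<rho> (x \<otimes> y) *\<^sub>v v = \<rho> x *\<^sub>v (\<rho> y *\<^sub>v v)"
  using irred assms assoc_mult_mat_vec[OF rep_carrier[OF assms(1)] rep_carrier[OF assms(2)] assms(3)]
  unfolding irred_rep_def mat_rep_def by simp

definition annihilator :: "complex vec \<Rightarrow> complex vec set" where
  "annihilator l = {u \<in> carrier_vec n. \<forall>x\<in>carrier W. l \<bullet> (\<rho> x *\<^sub>v u) = 0}"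

lemma subspace_annihilator:
  assumes l: "l \<in> carrier_vec n"
  shows "subspace_vec n (annihilator l)"
  unfolding subspace_vec_def
proof (intro conjI ballI allI)
  show "annihilator l \<subseteq> carrier_vec n" unfolding annihilator_def by auto
  have "\<rho> x *\<^sub>v 0\<^sub>v n = 0\<^sub>v n" if "x \<in> carrier W" for x
    using rep_carrier[OF that] by (intro eq_vecI) auto
  then show "0\<^sub>v n \<in> annihilator l" unfolding annihilator_def using l by simp
next
  fix a b assume a: "a \<in> annihilator l" and b: "b \<in> annihilator l"
  have "l \<bullet> (\<rho> x *\<^sub>v (a + b)) = l \<bullet> (\<rho> x *\<^sub>v a) + l \<bullet> (\<rho> x *\<^sub>v b)"
    if x: "x \<in> carrier W" for x
    using a b mult_add_distrib_mat_vec[OF rep_carrier[OF x]]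
      scalar_prod_add_distrib[OF l rep_vec_carrier[OF x] rep_vec_carrier[OF x]]
    unfolding annihilator_def by simp
  then show "a + b \<in> annihilator l" using a b unfolding annihilator_def by simp
next
  fix c a assume a: "a \<in> annihilator l"
  have "l \<bullet> (\<rho> x *\<^sub>v (c \<cdot>\<^sub>v a)) = c * (l \<bullet> (\<rho> x *\<^sub>v a))" if x: "x \<in> carrier W" for x
    using a mult_mat_vec[OF rep_carrier[OF x]] scalar_prod_smult_distrib[OF l rep_vec_carrier[OF x]]
    unfolding annihilator_def by simp
  then show "c \<cdot>\<^sub>v a \<in> annihilator l" using a unfolding annihilator_def by simp
qed

lemma rep_annihilator:
  assumes "g \<in> carrier W" "u \<in> annihilator l"
  shows "\<rho> g *\<^sub>v u \<in> annihilator l"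
  using assms rep_mult_vec[OF _ assms(1), symmetric] unfolding annihilator_def by simp

text \<open>Irreducibility: the annihilator of a nonzero functional is a proper invariant subspace.\<close>

lemma annihilator_trivial:
  assumes l: "l \<in> carrier_vec n" "l \<noteq> 0\<^sub>v n" and u: "u \<in> annihilator l"
  shows "u = 0\<^sub>v n"
proof -
  have "annihilator l \<noteq> carrier_vec n"
  proof
    assume full: "annihilator l = carrier_vec n"
    have "l = 0\<^sub>v n"
    proof (rule eq_vecI)
      fix i assume "i < dim_vec (0\<^sub>v n)"
      then have i: "i < n" by simp
      have "unit_vec n i \<in> annihilator l" using full by simp
      then have "l \<bullet> (\<rho> \<one> *\<^sub>v unit_vec n i) = 0" unfolding annihilator_def by simp
      then show "l $ i = 0\<^sub>v n $ i" using i by (simp add: rep_one)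
    qed (use l in simp)
    then show False using l(2) by simp
  qed
  then have "annihilator l = {0\<^sub>v n}"
    using irred subspace_annihilator[OF l(1)] rep_annihilator unfolding irred_rep_def by blast
  then show ?thesis using u by simp
qed

end

section \<open>Multiplicity one\<close>

locale gelfand_trick_irrep = gelfand_trick W H \<phi> \<psi> s + irrep W n \<rho>
  for W (structure) and H \<phi> \<psi> s n \<rho>
begin

text \<open>\<open>avg_mat\<close> is \<open>|H|\<close> times the projection onto the \<open>\<phi>\<close>-isotypic part of the restriction of
  \<open>\<rho>\<close> to \<open>H\<close>, and \<open>hecke_op x\<close> acts on functionals \<open>l\<close> (identified with vectors via \<open>\<bullet>\<close>)
  as \<open>l \<mapsto> l \<circ> \<rho> x \<circ> avg_mat\<close>.\<close>

definition avg_mat :: "complex mat" where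
  "avg_mat = mat n n (\<lambda>(i, j). \<Sum>h\<in>H. \<phi> (inv h) * \<rho> h $$ (i, j))"

definition hecke_op :: "'a \<Rightarrow> complex mat" where
  "hecke_op x = transpose_mat (\<rho> x * avg_mat)"

definition equivariant_functionals :: "complex vec set" where
  "equivariant_functionals =
    {l \<in> carrier_vec n. \<forall>h\<in>H. \<forall>v\<in>carrier_vec n. l \<bullet> (\<rho> h *\<^sub>v v) = \<phi> h * (l \<bullet> v)}"

lemma avg_mat_carrier [simp]: "avg_mat \<in> carrier_mat n n"
  unfolding avg_mat_def by simp

lemma avg_mat_vec_carrier [simp]: "v \<in> carrier_vec n \<Longrightarrow> avg_mat *\<^sub>v v \<in> carrier_vec n"
  using mult_mat_vec_carrier[OF avg_mat_carrier] by blast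

lemma hecke_op_carrier [simp]: "x \<in> carrier W \<Longrightarrow> hecke_op x \<in> carrier_mat n n"
  unfolding hecke_op_def using mult_carrier_mat[OF rep_carrier avg_mat_carrier] by auto

lemma hecke_op_vec_carrier [simp]:
  "x \<in> carrier W \<Longrightarrow> l \<in> carrier_vec n \<Longrightarrow> hecke_op x *\<^sub>v l \<in> carrier_vec n"
  using mult_mat_vec_carrier[OF hecke_op_carrier] by blast

lemma equivariant_functionals_carrier: "l \<in> equivariant_functionals \<Longrightarrow> l \<in> carrier_vec n"
  unfolding equivariant_functionals_def by simp

lemma scalar_prod_avg_mat:
  assumes l: "l \<in> carrier_vec n" and v: "v \<in> carrier_vec n"
  shows "l \<bullet> (avg_mat *\<^sub>v v) = (\<Sum>h\<in>H. \<phi> (inv h) * (l \<bullet> (\<rho> h *\<^sub>v v)))"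
proof -
  have "l \<bullet> (avg_mat *\<^sub>v v) =
      (\<Sum>i=0..<n. l $ i * (\<Sum>j=0..<n. (\<Sum>h\<in>H. \<phi> (inv h) * \<rho> h $$ (i, j)) * v $ j))"
    unfolding scalar_prod_def using l v by (intro sum.cong) (auto simp: avg_mat_def scalar_prod_def)
  also have "\<dots> = (\<Sum>i=0..<n. \<Sum>h\<in>H. \<Sum>j=0..<n. l $ i * (\<phi> (inv h) * \<rho> h $$ (i, j) * v $ j))"
    by (intro sum.cong refl) (simp add: sum_distrib_left sum_distrib_right sum.swap[of _ H] mult.assoc)
  also have "\<dots> = (\<Sum>h\<in>H. \<Sum>i=0..<n. \<Sum>j=0..<n. l $ i * (\<phi> (inv h) * \<rho> h $$ (i, j) * v $ j))"
    by (rule sum.swap)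
  also have "\<dots> = (\<Sum>h\<in>H. \<phi> (inv h) * (l \<bullet> (\<rho> h *\<^sub>v v)))"
  proof (rule sum.cong[OF refl])
    fix h assume "h \<in> H"
    then have "\<rho> h \<in> carrier_mat n n" using rep_carrier subgroup_carrier by blast
    then have "l \<bullet> (\<rho> h *\<^sub>v v) = (\<Sum>i=0..<n. l $ i * (\<Sum>j=0..<n. \<rho> h $$ (i, j) * v $ j))"
      unfolding scalar_prod_def using l v by (intro sum.cong) (auto simp: scalar_prod_def)
    then show "(\<Sum>i=0..<n. \<Sum>j=0..<n. l $ i * (\<phi> (inv h) * \<rho> h $$ (i, j) * v $ j))
        = \<phi> (inv h) * (l \<bullet> (\<rho> h *\<^sub>v v))"
      by (simp add: sum_distrib_left ac_simps)
  qed
  finally show ?thesis .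
qed

lemma scalar_prod_rep_avg_mat:
  assumes x: "x \<in> carrier W" and l: "l \<in> carrier_vec n" and u: "u \<in> carrier_vec n"
  shows "l \<bullet> (\<rho> x *\<^sub>v (avg_mat *\<^sub>v u)) = (\<Sum>h\<in>H. \<phi> (inv h) * (l \<bullet> (\<rho> (x \<otimes> h) *\<^sub>v u)))"
proof -
  let ?l = "transpose_mat (\<rho> x) *\<^sub>v l"
  have "l \<bullet> (\<rho> x *\<^sub>v (avg_mat *\<^sub>v u)) = ?l \<bullet> (avg_mat *\<^sub>v u)"
    by (rule transpose_vec_mult_scalar[OF rep_carrier[OF x] avg_mat_vec_carrier[OF u] l, symmetric])
  also have "\<dots> = (\<Sum>h\<in>H. \<phi> (inv h) * (?l \<bullet> (\<rho> h *\<^sub>v u)))"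
    using rep_carrier[OF x] l u by (intro scalar_prod_avg_mat) auto
  also have "\<dots> = (\<Sum>h\<in>H. \<phi> (inv h) * (l \<bullet> (\<rho> (x \<otimes> h) *\<^sub>v u)))"
  proof (rule sum.cong[OF refl])
    fix h assume "h \<in> H"
    then have h: "h \<in> carrier W" using subgroup_carrier by blast
    have "?l \<bullet> (\<rho> h *\<^sub>v u) = l \<bullet> (\<rho> x *\<^sub>v (\<rho> h *\<^sub>v u))"
      by (rule transpose_vec_mult_scalar[OF rep_carrier[OF x] rep_vec_carrier[OF h u] l])
    then show "\<phi> (inv h) * (?l \<bullet> (\<rho> h *\<^sub>v u)) = \<phi> (inv h) * (l \<bullet> (\<rho> (x \<otimes> h) *\<^sub>v u))"
      using rep_mult_vec[OF x h u] by simp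
  qed
  finally show ?thesis .
qed

lemma scalar_prod_hecke_op:
  assumes x: "x \<in> carrier W" and l: "l \<in> carrier_vec n" and v: "v \<in> carrier_vec n"
  shows "(hecke_op x *\<^sub>v l) \<bullet> v = l \<bullet> (\<rho> x *\<^sub>v (avg_mat *\<^sub>v v))"
proof -
  have "(hecke_op x *\<^sub>v l) \<bullet> v = l \<bullet> ((\<rho> x * avg_mat) *\<^sub>v v)"
    unfolding hecke_op_def
    by (rule transpose_vec_mult_scalar[OF mult_carrier_mat[OF rep_carrier[OF x] avg_mat_carrier] v l])
  then show ?thesis using assoc_mult_mat_vec[OF rep_carrier[OF x] avg_mat_carrier v] by simp
qed

lemma equivariant_functional_rep_mult:
  assumes l: "l \<in> equivariant_functionals" and h: "h \<in> H" and y: "y \<in> carrier W"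
    and v: "v \<in> carrier_vec n"
  shows "l \<bullet> (\<rho> (h \<otimes> y) *\<^sub>v v) = \<phi> h * (l \<bullet> (\<rho> y *\<^sub>v v))"
  using l h rep_mult_vec[OF subgroup_carrier[OF h] y v] y v
  unfolding equivariant_functionals_def by simp

lemma smult_equivariant_functional:
  assumes l: "l \<in> equivariant_functionals"
  shows "c \<cdot>\<^sub>v l \<in> equivariant_functionals"
  using l subgroup_carrier
  by (auto simp: equivariant_functionals_def smult_scalar_prod_distrib)

lemma minus_equivariant_functional:
  assumes l1: "l1 \<in> equivariant_functionals" and l2: "l2 \<in> equivariant_functionals"
  shows "l1 - l2 \<in> equivariant_functionals"
  using l1 l2 subgroup_carrier
  by (auto simp: equivariant_functionals_def minus_scalar_prod_distrib right_diff_distrib)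

lemma hecke_op_equivariant:
  assumes x: "x \<in> carrier W" and l: "l \<in> carrier_vec n"
  shows "hecke_op x *\<^sub>v l \<in> equivariant_functionals"
  unfolding equivariant_functionals_def
proof (intro CollectI conjI ballI)
  show "hecke_op x *\<^sub>v l \<in> carrier_vec n" using x l by simp
  fix k and v :: "complex vec" assume k: "k \<in> H" and v: "v \<in> carrier_vec n"
  have k_carrier: "k \<in> carrier W" and inv_k: "inv k \<in> H"
    using k subgroup_carrier subgroup.m_inv_closed[OF subgroup] by auto
  have kv: "\<rho> k *\<^sub>v v \<in> carrier_vec n" using k_carrier v by simp
  have "(hecke_op x *\<^sub>v l) \<bullet> (\<rho> k *\<^sub>v v) = (\<Sum>h\<in>H. \<phi> (inv h) * (l \<bullet> (\<rho> (x \<otimes> h \<otimes> k) *\<^sub>v v)))"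
    unfolding scalar_prod_hecke_op[OF x l kv] scalar_prod_rep_avg_mat[OF x l kv]
    using x k_carrier v subgroup_carrier by (intro sum.cong refl) (simp add: rep_mult_vec)
  also have "\<dots> = (\<Sum>h\<in>H. \<phi> (inv (h \<otimes> inv k)) * (l \<bullet> (\<rho> (x \<otimes> (h \<otimes> inv k) \<otimes> k) *\<^sub>v v)))"
    by (rule sum.reindex_bij_betw[OF bij_betw_mult_right_subgroup[OF subgroup inv_k], symmetric])
  also have "\<dots> = (\<Sum>h\<in>H. \<phi> k * (\<phi> (inv h) * (l \<bullet> (\<rho> (x \<otimes> h) *\<^sub>v v))))"
  proof (rule sum.cong[OF refl])
    fix h assume h: "h \<in> H"
    have "x \<otimes> (h \<otimes> inv k) \<otimes> k = x \<otimes> h" using x h k_carrier subgroup_carrier by (simp add: m_assoc)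
    moreover have "\<phi> (inv (h \<otimes> inv k)) = \<phi> (inv h) * \<phi> k"
      using \<phi>_inv_mult[OF h inv_k] k_carrier by simp
    ultimately show "\<phi> (inv (h \<otimes> inv k)) * (l \<bullet> (\<rho> (x \<otimes> (h \<otimes> inv k) \<otimes> k) *\<^sub>v v))
        = \<phi> k * (\<phi> (inv h) * (l \<bullet> (\<rho> (x \<otimes> h) *\<^sub>v v)))"
      by (simp add: ac_simps)
  qed
  also have "\<dots> = \<phi> k * ((hecke_op x *\<^sub>v l) \<bullet> v)"
    unfolding scalar_prod_hecke_op[OF x l v] scalar_prod_rep_avg_mat[OF x l v] by (simp add: sum_distrib_left)
  finally show "(hecke_op x *\<^sub>v l) \<bullet> (\<rho> k *\<^sub>v v) = \<phi> k * ((hecke_op x *\<^sub>v l) \<bullet> v)" .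
qed

lemma equivariant_functional_avg_mat:
  assumes l: "l \<in> equivariant_functionals" and v: "v \<in> carrier_vec n"
  shows "l \<bullet> (avg_mat *\<^sub>v v) = of_nat (card H) * (l \<bullet> v)"
proof -
  have "l \<bullet> (avg_mat *\<^sub>v v) = (\<Sum>h\<in>H. \<phi> (inv h) * (l \<bullet> (\<rho> h *\<^sub>v v)))"
    using scalar_prod_avg_mat[OF equivariant_functionals_carrier[OF l] v] .
  also have "\<dots> = (\<Sum>h\<in>H. l \<bullet> v)"
    using l v \<phi>_inv by (intro sum.cong refl) (auto simp: equivariant_functionals_def mult.assoc[symmetric])
  finally show ?thesis by simp
qed

lemma scalar_prod_hecke_op_hecke_op:
  assumes l: "l \<in> carrier_vec n" and x: "x \<in> carrier W" and y: "y \<in> carrier W"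
    and v: "v \<in> carrier_vec n"
  shows "(hecke_op x *\<^sub>v (hecke_op y *\<^sub>v l)) \<bullet> v = hecke_sum (\<lambda>z. l \<bullet> (\<rho> z *\<^sub>v v)) y x"
proof -
  have Qv: "avg_mat *\<^sub>v v \<in> carrier_vec n" using v by simp
  have u: "\<rho> x *\<^sub>v (avg_mat *\<^sub>v v) \<in> carrier_vec n" using x v by simp
  have "(hecke_op x *\<^sub>v (hecke_op y *\<^sub>v l)) \<bullet> v
      = l \<bullet> (\<rho> y *\<^sub>v (avg_mat *\<^sub>v (\<rho> x *\<^sub>v (avg_mat *\<^sub>v v))))"
    using scalar_prod_hecke_op[OF x _ v, of "hecke_op y *\<^sub>v l"] scalar_prod_hecke_op[OF y l u] x y l
    by simp
  also have "\<dots> = (\<Sum>m\<in>H. \<phi> (inv m) * (l \<bullet> (\<rho> (y \<otimes> m) *\<^sub>v (\<rho> x *\<^sub>v (avg_mat *\<^sub>v v)))))"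
    by (rule scalar_prod_rep_avg_mat[OF y l u])
  also have "\<dots> = hecke_sum (\<lambda>z. l \<bullet> (\<rho> z *\<^sub>v v)) y x"
    unfolding hecke_sum_def
  proof (rule sum.cong[OF refl])
    fix m assume "m \<in> H"
    then have ym: "y \<otimes> m \<in> carrier W" using y subgroup_carrier by blast
    then show "\<phi> (inv m) * (l \<bullet> (\<rho> (y \<otimes> m) *\<^sub>v (\<rho> x *\<^sub>v (avg_mat *\<^sub>v v))))
        = \<phi> (inv m) * (\<Sum>h\<in>H. \<phi> (inv h) * (l \<bullet> (\<rho> (y \<otimes> m \<otimes> x \<otimes> h) *\<^sub>v v)))"
      using rep_mult_vec[OF ym x Qv] scalar_prod_rep_avg_mat[OF _ l v, of "y \<otimes> m \<otimes> x"] x by simp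
  qed
  finally show ?thesis .
qed

lemma hecke_op_commute:
  assumes l: "l \<in> equivariant_functionals" and x: "x \<in> carrier W" and y: "y \<in> carrier W"
  shows "hecke_op x *\<^sub>v (hecke_op y *\<^sub>v l) = hecke_op y *\<^sub>v (hecke_op x *\<^sub>v l)"
proof (rule eq_vec_if_scalar_prod_eq)
  have l_carrier: "l \<in> carrier_vec n" using equivariant_functionals_carrier[OF l] .
  then show "hecke_op x *\<^sub>v (hecke_op y *\<^sub>v l) \<in> carrier_vec n"
    and "hecke_op y *\<^sub>v (hecke_op x *\<^sub>v l) \<in> carrier_vec n" using x y by simp_all
  fix v :: "complex vec" assume v: "v \<in> carrier_vec n"
  have "left_equivariant (\<lambda>z. l \<bullet> (\<rho> z *\<^sub>v v))"
    unfolding left_equivariant_def using equivariant_functional_rep_mult[OF l _ _ v] by blast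
  then show "(hecke_op x *\<^sub>v (hecke_op y *\<^sub>v l)) \<bullet> v = (hecke_op y *\<^sub>v (hecke_op x *\<^sub>v l)) \<bullet> v"
    unfolding scalar_prod_hecke_op_hecke_op[OF l_carrier x y v] scalar_prod_hecke_op_hecke_op[OF l_carrier y x v]
    by (rule hecke_sum_commute[OF _ x y])
qed

text \<open>If \<open>l\<^sub>0 \<circ> hecke_op x = c l\<^sub>0\<close>, then by commutativity the functional \<open>l\<^sub>0\<close> kills
  \<open>\<rho> y (avg_mat w)\<close> for all \<open>y\<close>, where \<open>w = \<rho> x (avg_mat v) - c v\<close>; by irreducibility
  \<open>avg_mat w = 0\<close>, and then every equivariant \<open>\<mu>\<close> kills \<open>w\<close>.\<close>

lemma hecke_op_eigenvector_extends:
  assumes l0: "l0 \<in> equivariant_functionals" "l0 \<noteq> 0\<^sub>v n" and x: "x \<in> carrier W"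
    and eigen: "hecke_op x *\<^sub>v l0 = c \<cdot>\<^sub>v l0" and \<mu>: "\<mu> \<in> equivariant_functionals"
  shows "hecke_op x *\<^sub>v \<mu> = c \<cdot>\<^sub>v \<mu>"
proof (rule eq_vec_if_scalar_prod_eq)
  have l0_carrier: "l0 \<in> carrier_vec n" and \<mu>_carrier: "\<mu> \<in> carrier_vec n"
    using equivariant_functionals_carrier l0(1) \<mu> by auto
  then show "hecke_op x *\<^sub>v \<mu> \<in> carrier_vec n" "c \<cdot>\<^sub>v \<mu> \<in> carrier_vec n" using x by simp_all
  fix v :: "complex vec" assume v: "v \<in> carrier_vec n"
  define w where "w = \<rho> x *\<^sub>v (avg_mat *\<^sub>v v) - c \<cdot>\<^sub>v v"
  have w: "w \<in> carrier_vec n" unfolding w_def using x v by simp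
  have scalar_prod_w: "u \<bullet> w = u \<bullet> (\<rho> x *\<^sub>v (avg_mat *\<^sub>v v)) - c * (u \<bullet> v)"
    if "u \<in> carrier_vec n" for u
    unfolding w_def using that x v by (simp add: scalar_prod_minus_distrib)
  have "l0 \<bullet> (\<rho> y *\<^sub>v (avg_mat *\<^sub>v w)) = 0" if y: "y \<in> carrier W" for y
  proof -
    have My: "hecke_op y *\<^sub>v l0 \<in> carrier_vec n" using y l0_carrier by simp
    have "l0 \<bullet> (\<rho> y *\<^sub>v (avg_mat *\<^sub>v w)) = (hecke_op y *\<^sub>v l0) \<bullet> w"
      using scalar_prod_hecke_op[OF y l0_carrier w] by simp
    also have "\<dots> = (hecke_op x *\<^sub>v (hecke_op y *\<^sub>v l0)) \<bullet> v - c * ((hecke_op y *\<^sub>v l0) \<bullet> v)"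
      using scalar_prod_w[OF My] scalar_prod_hecke_op[OF x My v] by simp
    also have "(hecke_op x *\<^sub>v (hecke_op y *\<^sub>v l0)) = c \<cdot>\<^sub>v (hecke_op y *\<^sub>v l0)"
      using hecke_op_commute[OF l0(1) x y] eigen mult_mat_vec[OF hecke_op_carrier[OF y] l0_carrier]
      by simp
    finally show ?thesis using My v by simp
  qed
  then have "avg_mat *\<^sub>v w \<in> annihilator l0" unfolding annihilator_def using w by simp
  then have "avg_mat *\<^sub>v w = 0\<^sub>v n" using annihilator_trivial l0_carrier l0(2) by blast
  then have "of_nat (card H) * (\<mu> \<bullet> w) = 0"
    using equivariant_functional_avg_mat[OF \<mu> w] \<mu>_carrier by simp
  then have "\<mu> \<bullet> (\<rho> x *\<^sub>v (avg_mat *\<^sub>v v)) = c * (\<mu> \<bullet> v)"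
    using card_subgroup_pos scalar_prod_w[OF \<mu>_carrier] by simp
  then show "(hecke_op x *\<^sub>v \<mu>) \<bullet> v = (c \<cdot>\<^sub>v \<mu>) \<bullet> v"
    using scalar_prod_hecke_op[OF x \<mu>_carrier v] \<mu>_carrier v by simp
qed

lemma hecke_op_acts_by_scalar:
  assumes l: "l \<in> equivariant_functionals" "l \<noteq> 0\<^sub>v n" and x: "x \<in> carrier W"
  shows "\<exists>c. \<forall>\<mu>\<in>equivariant_functionals. hecke_op x *\<^sub>v \<mu> = c \<cdot>\<^sub>v \<mu>"
proof -
  obtain w e where "w \<in> equivariant_functionals" "w \<noteq> 0\<^sub>v n" "hecke_op x *\<^sub>v w = e \<cdot>\<^sub>v w"
    using eigenvector_in_superset_of_range[OF hecke_op_carrier[OF x] _ smult_equivariant_functional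
        hecke_op_equivariant[OF x] l] equivariant_functionals_carrier by blast
  then show ?thesis using hecke_op_eigenvector_extends[OF _ _ x] by blast
qed

lemma equivariant_functionals_collinear:
  assumes l: "l \<in> equivariant_functionals" "l \<noteq> 0\<^sub>v n" and \<mu>: "\<mu> \<in> equivariant_functionals"
  shows "\<exists>d. \<mu> = d \<cdot>\<^sub>v l"
proof -
  have l_carrier: "l \<in> carrier_vec n" and \<mu>_carrier: "\<mu> \<in> carrier_vec n"
    using equivariant_functionals_carrier l(1) \<mu> by auto
  have "\<exists>i<n. l $ i \<noteq> 0"
  proof (rule ccontr)
    assume "\<not> (\<exists>i<n. l $ i \<noteq> 0)"
    then have "l = 0\<^sub>v n" using l_carrier by (intro eq_vecI) auto
    then show False using l(2) by simp
  qed
  then obtain i where i: "i < n" and li: "l $ i \<noteq> 0" by blast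
  define v :: "complex vec" where "v = unit_vec n i"
  have v_carrier: "v \<in> carrier_vec n" unfolding v_def by simp
  define d where "d = \<mu> $ i / l $ i"
  define \<eta> where "\<eta> = \<mu> - d \<cdot>\<^sub>v l"
  have \<eta>: "\<eta> \<in> equivariant_functionals"
    unfolding \<eta>_def using minus_equivariant_functional[OF \<mu> smult_equivariant_functional[OF l(1)]] .
  have \<eta>_carrier: "\<eta> \<in> carrier_vec n" using equivariant_functionals_carrier[OF \<eta>] .
  have "\<eta> = 0\<^sub>v n"
  proof (rule ccontr)
    assume \<eta>_nonzero: "\<eta> \<noteq> 0\<^sub>v n"
    have "\<eta> \<bullet> v = 0" unfolding v_def using i \<eta>_carrier \<mu>_carrier l_carrier li by (simp add: \<eta>_def d_def)
    have "\<eta> \<bullet> (\<rho> x *\<^sub>v (avg_mat *\<^sub>v v)) = 0" if x: "x \<in> carrier W" for x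
    proof -
      obtain c where "\<forall>\<mu>\<in>equivariant_functionals. hecke_op x *\<^sub>v \<mu> = c \<cdot>\<^sub>v \<mu>"
        using hecke_op_acts_by_scalar[OF l x] by blast
      then have "(hecke_op x *\<^sub>v \<eta>) \<bullet> v = c * (\<eta> \<bullet> v)" using \<eta> \<eta>_carrier v_carrier by simp
      then show ?thesis using scalar_prod_hecke_op[OF x \<eta>_carrier v_carrier] \<open>\<eta> \<bullet> v = 0\<close> by simp
    qed
    then have "avg_mat *\<^sub>v v \<in> annihilator \<eta>" unfolding annihilator_def using v_carrier by simp
    then have "avg_mat *\<^sub>v v = 0\<^sub>v n" using annihilator_trivial \<eta>_carrier \<eta>_nonzero by blast
    then have "of_nat (card H) * l $ i = 0"
      using equivariant_functional_avg_mat[OF l(1) v_carrier] l_carrier i by (simp add: v_def)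
    then show False using li card_subgroup_pos by simp
  qed
  have "\<mu> = d \<cdot>\<^sub>v l"
  proof (rule eq_vecI)
    fix j assume "j < dim_vec (d \<cdot>\<^sub>v l)"
    then have j: "j < n" using l_carrier by simp
    then have "\<eta> $ j = 0" using \<open>\<eta> = 0\<^sub>v n\<close> by simp
    then show "\<mu> $ j = (d \<cdot>\<^sub>v l) $ j" using j \<mu>_carrier l_carrier unfolding \<eta>_def by simp
  qed (use \<mu>_carrier l_carrier in simp)
  then show ?thesis by blast
qed


text \<open>Frobenius reciprocity: an intertwiner is determined by the functional \<open>v \<mapsto> T v \<one>\<close>.\<close>

definition intertwiner_functional :: "(complex vec \<Rightarrow> 'a \<Rightarrow> complex) \<Rightarrow> complex vec" where
  "intertwiner_functional T = vec n (\<lambda>i. T (unit_vec n i) \<one>)"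

lemma intertwiner_functional_carrier: "intertwiner_functional T \<in> carrier_vec n"
  unfolding intertwiner_functional_def by simp

lemma intertwiner_eq_scalar_prod:
  assumes T: "intertwiner W H \<phi> n \<rho> T" and v: "v \<in> carrier_vec n" and x: "x \<in> carrier W"
  shows "T v x = intertwiner_functional T \<bullet> (\<rho> x *\<^sub>v v)"
proof -
  have "T v x = T (\<rho> x *\<^sub>v v) \<one>" using T x v unfolding intertwiner_def by simp
  also have "\<dots> = intertwiner_functional T \<bullet> (\<rho> x *\<^sub>v v)"
    unfolding intertwiner_functional_def
    by (rule linear_functional_eq_scalar_prod[of n "\<lambda>v. T v \<one>"]) (use T x v in \<open>auto simp: intertwiner_def\<close>)
  finally show ?thesis .
qed

lemma intertwiner_outside_carrier:
  "intertwiner W H \<phi> n \<rho> T \<Longrightarrow> v \<in> carrier_vec n \<Longrightarrow> x \<notin> carrier W \<Longrightarrow> T v x = 0"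
  unfolding intertwiner_def ind_space_def by simp

lemma intertwiner_functional_equivariant:
  assumes T: "intertwiner W H \<phi> n \<rho> T"
  shows "intertwiner_functional T \<in> equivariant_functionals"
  unfolding equivariant_functionals_def
proof (intro CollectI conjI ballI intertwiner_functional_carrier)
  fix h and v :: "complex vec" assume h: "h \<in> H" and v: "v \<in> carrier_vec n"
  have "T v \<in> ind_space W H \<phi>" using T v unfolding intertwiner_def by simp
  then have "T v (h \<otimes> \<one>) = \<phi> h * T v \<one>" using h unfolding ind_space_def by simp
  then have "T v h = \<phi> h * T v \<one>" using h subgroup_carrier by simp
  then show "intertwiner_functional T \<bullet> (\<rho> h *\<^sub>v v) = \<phi> h * (intertwiner_functional T \<bullet> v)"
    using intertwiner_eq_scalar_prod[OF T v] h subgroup_carrier v by (simp add: rep_one)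
qed

lemma intertwiners_collinear:
  assumes T1: "intertwiner W H \<phi> n \<rho> T1" and T2: "intertwiner W H \<phi> n \<rho> T2"
    and nonzero: "intertwiner_functional T2 \<noteq> 0\<^sub>v n"
  shows "\<exists>c. \<forall>v\<in>carrier_vec n. T1 v = (\<lambda>x. c * T2 v x)"
proof -
  obtain d where d: "intertwiner_functional T1 = d \<cdot>\<^sub>v intertwiner_functional T2"
    using equivariant_functionals_collinear[OF intertwiner_functional_equivariant[OF T2] nonzero
        intertwiner_functional_equivariant[OF T1]] by blast
  have "T1 v x = d * T2 v x" if v: "v \<in> carrier_vec n" for v x
  proof (cases "x \<in> carrier W")
    case True
    then show ?thesis
      using intertwiner_eq_scalar_prod[OF T1 v True] intertwiner_eq_scalar_prod[OF T2 v True] d v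
      by (simp add: smult_scalar_prod_distrib[OF intertwiner_functional_carrier])
  qed (use intertwiner_outside_carrier[OF T1 v] intertwiner_outside_carrier[OF T2 v] in simp)
  then show ?thesis by blast
qed

lemma intertwiner_eq_zero:
  assumes "intertwiner W H \<phi> n \<rho> T" "intertwiner_functional T = 0\<^sub>v n" "v \<in> carrier_vec n"
  shows "T v = (\<lambda>x. 0)"
proof
  fix x show "T v x = 0"
    using intertwiner_eq_scalar_prod[OF assms(1,3)] intertwiner_outside_carrier[OF assms(1,3)] assms(2,3)
    by (cases "x \<in> carrier W") simp_all
qed

lemma intertwiners_dependent:
  assumes T1: "intertwiner W H \<phi> n \<rho> T1" and T2: "intertwiner W H \<phi> n \<rho> T2"
  shows "(\<exists>c. \<forall>v\<in>carrier_vec n. T1 v = (\<lambda>x. c * T2 v x)) \<or>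
    (\<exists>c. \<forall>v\<in>carrier_vec n. T2 v = (\<lambda>x. c * T1 v x))"
proof (cases "intertwiner_functional T2 = 0\<^sub>v n")
  case True
  then have "\<forall>v\<in>carrier_vec n. T2 v = (\<lambda>x. 0 * T1 v x)" using intertwiner_eq_zero[OF T2] by simp
  then show ?thesis by blast
qed (use intertwiners_collinear[OF T1 T2] in blast)

end

section \<open>The wreath product \<open>G \<wr> S\<^sub>2\<close>\<close>

definition swap12 :: "nat \<Rightarrow> nat" where
  "swap12 = Transposition.transpose 1 2"

lemma carrier_sym_group_2: "carrier (sym_group 2) = {id, swap12}"
proof
  show "{id, swap12} \<subseteq> carrier (sym_group 2)"
    by (auto simp: sym_group_def permutes_id permutes_swap_id swap12_def)
  show "carrier (sym_group 2) \<subseteq> {id, swap12}"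
  proof
    fix p assume "p \<in> carrier (sym_group 2)"
    then have p: "p permutes {1..2}" by (simp add: sym_group_carrier)
    have fixed: "p x = x" if "x \<noteq> 1" "x \<noteq> 2" for x using permutes_not_in[OF p] that by auto
    have p1: "p 1 \<in> {1, 2}" and p2: "p 2 \<in> {1, 2}"
      using permutes_in_image[OF p, of 1] permutes_in_image[OF p, of 2] by auto
    have "inj p" using p permutes_inj by blast
    then consider "p 1 = 1" "p 2 = 2" | "p 1 = 2" "p 2 = 1"
      using p1 p2 by (metis injD insertE numeral_eq_one_iff semiring_norm(85) singletonD)
    then show "p \<in> {id, swap12}"
    proof cases
      case 1
      then have "p = id" using fixed by (intro ext) (metis id_apply)
      then show ?thesis by simp
    next
      case 2
      then have "p = swap12" using fixed by (intro ext) (auto simp: transpose_def swap12_def)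
      then show ?thesis by simp
    qed
  qed
qed

lemma inv_swap12: "Hilbert_Choice.inv swap12 = swap12"
  by (simp add: inv_swap_id swap12_def)

lemma swap12_swap12 [simp]: "swap12 \<circ> swap12 = id"
  by (simp add: swap12_def)

lemma wreath2_mult_id:
  "(g1, g2, id) \<otimes>\<^bsub>wreath2 G\<^esub> (h1, h2, t) = (g1 \<otimes>\<^bsub>G\<^esub> h1, g2 \<otimes>\<^bsub>G\<^esub> h2, t)"
  by (simp add: wreath2_def coord2_def)

lemma wreath2_mult_swap12:
  "(g1, g2, swap12) \<otimes>\<^bsub>wreath2 G\<^esub> (h1, h2, t) = (g1 \<otimes>\<^bsub>G\<^esub> h2, g2 \<otimes>\<^bsub>G\<^esub> h1, swap12 \<circ> t)"
  by (simp add: wreath2_def coord2_def inv_swap12 transpose_def swap12_def)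

lemma wreath2_one: "\<one>\<^bsub>wreath2 G\<^esub> = (\<one>\<^bsub>G\<^esub>, \<one>\<^bsub>G\<^esub>, id)"
  by (simp add: wreath2_def)

lemma wreath2_carrier_iff:
  "(a, b, \<sigma>) \<in> carrier (wreath2 G) \<longleftrightarrow> a \<in> carrier G \<and> b \<in> carrier G \<and> (\<sigma> = id \<or> \<sigma> = swap12)"
  by (auto simp: wreath2_def carrier_sym_group_2)

lemmas wreath2_simps = wreath2_mult_id wreath2_mult_swap12 wreath2_one wreath2_carrier_iff

lemma finite_carrier_wreath2:
  assumes "finite (carrier G)"
  shows "finite (carrier (wreath2 G))"
proof (rule finite_subset)
  show "carrier (wreath2 G) \<subseteq> carrier G \<times> carrier G \<times> {id, swap12}"
    by (auto simp: wreath2_def carrier_sym_group_2)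
qed (use assms in simp)

lemma group_wreath2:
  assumes "group G"
  shows "group (wreath2 G)"
proof -
  interpret G: group G by fact
  show ?thesis
  proof (rule groupI)
    fix x y assume "x \<in> carrier (wreath2 G)" "y \<in> carrier (wreath2 G)"
    then show "x \<otimes>\<^bsub>wreath2 G\<^esub> y \<in> carrier (wreath2 G)"
      by (cases x; cases y) (auto simp: wreath2_simps)
  next
    fix x y z assume "x \<in> carrier (wreath2 G)" "y \<in> carrier (wreath2 G)" "z \<in> carrier (wreath2 G)"
    then show "x \<otimes>\<^bsub>wreath2 G\<^esub> y \<otimes>\<^bsub>wreath2 G\<^esub> z = x \<otimes>\<^bsub>wreath2 G\<^esub> (y \<otimes>\<^bsub>wreath2 G\<^esub> z)"
      by (cases x; cases y; cases z) (auto simp: wreath2_simps G.m_assoc)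
  next
    fix x assume "x \<in> carrier (wreath2 G)"
    then show "\<one>\<^bsub>wreath2 G\<^esub> \<otimes>\<^bsub>wreath2 G\<^esub> x = x"
      by (cases x) (auto simp: wreath2_simps)
  next
    fix x assume "x \<in> carrier (wreath2 G)"
    moreover obtain a b \<sigma> where x: "x = (a, b, \<sigma>)" by (cases x)
    ultimately consider "a \<in> carrier G" "b \<in> carrier G" "\<sigma> = id"
      | "a \<in> carrier G" "b \<in> carrier G" "\<sigma> = swap12"
      by (auto simp: wreath2_carrier_iff)
    then show "\<exists>y\<in>carrier (wreath2 G). y \<otimes>\<^bsub>wreath2 G\<^esub> x = \<one>\<^bsub>wreath2 G\<^esub>"
    proof cases
      case 1
      then show ?thesis unfolding x
        by (intro bexI[of _ "(inv\<^bsub>G\<^esub> a, inv\<^bsub>G\<^esub> b, id)"]) (auto simp: wreath2_simps)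
    next
      case 2
      then show ?thesis unfolding x
        by (intro bexI[of _ "(inv\<^bsub>G\<^esub> b, inv\<^bsub>G\<^esub> a, swap12)"]) (auto simp: wreath2_simps)
    qed
  qed (auto simp: wreath2_simps)
qed

lemma wreath2_inv:
  assumes "group G" "a \<in> carrier G" "b \<in> carrier G"
  shows "inv\<^bsub>wreath2 G\<^esub> (a, b, id) = (inv\<^bsub>G\<^esub> a, inv\<^bsub>G\<^esub> b, id)"
    and "inv\<^bsub>wreath2 G\<^esub> (a, b, swap12) = (inv\<^bsub>G\<^esub> b, inv\<^bsub>G\<^esub> a, swap12)"
proof -
  interpret G: group G by fact
  interpret W: group "wreath2 G" using group_wreath2[OF assms(1)] .
  show "inv\<^bsub>wreath2 G\<^esub> (a, b, id) = (inv\<^bsub>G\<^esub> a, inv\<^bsub>G\<^esub> b, id)"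
    using assms(2,3) by (intro W.inv_equality) (auto simp: wreath2_simps)
  show "inv\<^bsub>wreath2 G\<^esub> (a, b, swap12) = (inv\<^bsub>G\<^esub> b, inv\<^bsub>G\<^esub> a, swap12)"
    using assms(2,3) by (intro W.inv_equality) (auto simp: wreath2_simps)
qed

lemma wreath2_inv_diag:
  assumes "group G" "c \<in> carrier G" "\<sigma> \<in> carrier (sym_group 2)"
  shows "inv\<^bsub>wreath2 G\<^esub> (c, c, \<sigma>) = (inv\<^bsub>G\<^esub> c, inv\<^bsub>G\<^esub> c, \<sigma>)"
  using assms wreath2_inv[OF assms(1,2,2)] by (auto simp: carrier_sym_group_2)

lemma subgroup_diag_wreath2:
  assumes "group G"
  shows "subgroup (diag_wreath2 G) (wreath2 G)"
proof -
  interpret G: group G by fact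
  show ?thesis
  proof
    show "diag_wreath2 G \<subseteq> carrier (wreath2 G)"
      by (auto simp: diag_wreath2_def wreath2_simps carrier_sym_group_2)
    show "\<one>\<^bsub>wreath2 G\<^esub> \<in> diag_wreath2 G"
      by (auto simp: diag_wreath2_def wreath2_one carrier_sym_group_2)
  next
    fix x y assume "x \<in> diag_wreath2 G" "y \<in> diag_wreath2 G"
    then show "x \<otimes>\<^bsub>wreath2 G\<^esub> y \<in> diag_wreath2 G"
      by (auto simp: diag_wreath2_def carrier_sym_group_2 wreath2_simps)
  next
    fix x assume "x \<in> diag_wreath2 G"
    then show "inv\<^bsub>wreath2 G\<^esub> x \<in> diag_wreath2 G"
      by (auto simp: diag_wreath2_def wreath2_inv_diag[OF assms])
  qed
qed

lemma linear_char_sym_group_2_square: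
  assumes "linear_char (sym_group 2) \<epsilon>" "\<sigma> \<in> carrier (sym_group 2)"
  shows "\<epsilon> \<sigma> * \<epsilon> \<sigma> = 1"
proof -
  have "\<epsilon> \<sigma> * \<epsilon> \<sigma> = \<epsilon> (\<sigma> \<circ> \<sigma>)"
    using assms unfolding linear_char_def sym_group_mult by simp
  also have "\<sigma> \<circ> \<sigma> = \<one>\<^bsub>sym_group 2\<^esub>"
    using assms(2) by (auto simp: carrier_sym_group_2 sym_group_one)
  finally show ?thesis using linear_char_one[OF sym_group_is_group assms(1)] by simp
qed

lemma linear_char_tensor_char:
  assumes "group G" "linear_char G \<xi>" "linear_char (sym_group 2) \<epsilon>"
  shows "linear_char (wreath2 G\<lparr>carrier := diag_wreath2 G\<rparr>) (tensor_char \<xi> \<epsilon>)"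
  using assms(2,3)
  by (auto simp: linear_char_def diag_wreath2_def carrier_sym_group_2 wreath2_simps
      tensor_char_def sym_group_mult)

definition product_char :: "('a \<Rightarrow> complex) \<Rightarrow> 'a \<times> 'a \<times> (nat \<Rightarrow> nat) \<Rightarrow> complex" where
  "product_char \<xi> x = (case x of (a, b, _) \<Rightarrow> \<xi> a * \<xi> b)"

lemma linear_char_product_char:
  assumes "linear_char G \<xi>"
  shows "linear_char (wreath2 G) (product_char \<xi>)"
  unfolding linear_char_def
proof (intro conjI ballI)
  fix x y assume "x \<in> carrier (wreath2 G)" "y \<in> carrier (wreath2 G)"
  then show "product_char \<xi> (x \<otimes>\<^bsub>wreath2 G\<^esub> y) = product_char \<xi> x * product_char \<xi> y"
    using assms by (cases x; cases y) (auto simp: wreath2_simps product_char_def linear_char_def)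
qed (use assms in \<open>auto simp: wreath2_carrier_iff product_char_def linear_char_def\<close>)

lemma wreath2_anti_inv_in_double_coset:
  assumes "group G" "linear_char G \<xi>" "linear_char (sym_group 2) \<epsilon>"
    and w: "w \<in> carrier (wreath2 G)"
  defines "s \<equiv> (\<one>\<^bsub>G\<^esub>, \<one>\<^bsub>G\<^esub>, swap12)"
  shows "\<exists>h1\<in>diag_wreath2 G. \<exists>h2\<in>diag_wreath2 G.
    s \<otimes>\<^bsub>wreath2 G\<^esub> inv\<^bsub>wreath2 G\<^esub> w \<otimes>\<^bsub>wreath2 G\<^esub> s = h1 \<otimes>\<^bsub>wreath2 G\<^esub> w \<otimes>\<^bsub>wreath2 G\<^esub> h2 \<and>
    tensor_char \<xi> \<epsilon> (inv\<^bsub>wreath2 G\<^esub> h1) * tensor_char \<xi> \<epsilon> (inv\<^bsub>wreath2 G\<^esub> h2) = product_char \<xi> w"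
proof -
  interpret G: group G by fact
  obtain a b \<sigma> where w_eq: "w = (a, b, \<sigma>)" by (cases w)
  have a: "a \<in> carrier G" and b: "b \<in> carrier G" and \<sigma>: "\<sigma> \<in> carrier (sym_group 2)"
    using w by (auto simp: w_eq wreath2_carrier_iff carrier_sym_group_2)
  define h1 where "h1 = (inv\<^bsub>G\<^esub> b, inv\<^bsub>G\<^esub> b, \<sigma>)"
  define h2 where "h2 = (inv\<^bsub>G\<^esub> a, inv\<^bsub>G\<^esub> a, \<sigma>)"
  have diag: "h1 \<in> diag_wreath2 G" "h2 \<in> diag_wreath2 G"
    using a b \<sigma> by (auto simp: h1_def h2_def diag_wreath2_def)
  have "s \<otimes>\<^bsub>wreath2 G\<^esub> inv\<^bsub>wreath2 G\<^esub> w \<otimes>\<^bsub>wreath2 G\<^esub> s = h1 \<otimes>\<^bsub>wreath2 G\<^esub> w \<otimes>\<^bsub>wreath2 G\<^esub> h2"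
    using a b \<sigma> by (auto simp: s_def h1_def h2_def w_eq carrier_sym_group_2 wreath2_inv[OF assms(1) a b]
        wreath2_simps G.m_assoc)
  moreover have "tensor_char \<xi> \<epsilon> (inv\<^bsub>wreath2 G\<^esub> h1) * tensor_char \<xi> \<epsilon> (inv\<^bsub>wreath2 G\<^esub> h2)
      = \<xi> a * \<xi> b * (\<epsilon> \<sigma> * \<epsilon> \<sigma>)"
    using a b \<sigma> by (simp add: h1_def h2_def wreath2_inv_diag[OF assms(1)] tensor_char_def)
  moreover have "\<epsilon> \<sigma> * \<epsilon> \<sigma> = 1" using linear_char_sym_group_2_square[OF assms(3) \<sigma>] .
  ultimately show ?thesis using diag by (auto simp: product_char_def w_eq)
qed

lemma linear_char_sign: "linear_char (sym_group n) (\<lambda>p. of_int (sign p))"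
  unfolding linear_char_def
proof (intro conjI ballI)
  fix p q assume "p \<in> carrier (sym_group n)" "q \<in> carrier (sym_group n)"
  then show "of_int (sign (p \<otimes>\<^bsub>sym_group n\<^esub> q)) = of_int (sign p) * (of_int (sign q) :: complex)"
    by (simp add: sym_group_mult sign_compose sym_group_carrier')
qed (simp add: sign_def)

lemma gelfand_trick_wreath2:
  assumes "group G" "finite (carrier G)" "linear_char G \<xi>" "linear_char (sym_group 2) \<epsilon>"
  shows "gelfand_trick (wreath2 G) (diag_wreath2 G) (tensor_char \<xi> \<epsilon>) (product_char \<xi>)
    (\<one>\<^bsub>G\<^esub>, \<one>\<^bsub>G\<^esub>, swap12)"
proof (intro gelfand_trick.intro gelfand_trick_axioms.intro)
  interpret G: group G by fact
  show "group (wreath2 G)" using group_wreath2[OF assms(1)] .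
  show "(\<one>\<^bsub>G\<^esub>, \<one>\<^bsub>G\<^esub>, swap12) \<in> carrier (wreath2 G)"
    and "(\<one>\<^bsub>G\<^esub>, \<one>\<^bsub>G\<^esub>, swap12) \<otimes>\<^bsub>wreath2 G\<^esub> (\<one>\<^bsub>G\<^esub>, \<one>\<^bsub>G\<^esub>, swap12) = \<one>\<^bsub>wreath2 G\<^esub>"
    by (simp_all add: wreath2_simps)
qed (use assms finite_carrier_wreath2 subgroup_diag_wreath2 linear_char_tensor_char
    linear_char_product_char wreath2_anti_inv_in_double_coset in auto)

theorem proposition3p3:
  fixes G :: "('a, 'b) monoid_scheme" and \<xi> :: "'a \<Rightarrow> complex" and \<epsilon> :: "(nat \<Rightarrow> nat) \<Rightarrow> complex"
  assumes "group G" and "finite (carrier G)"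
    and "linear_char G \<xi>"
    and "\<epsilon> = (\<lambda>s. 1) \<or> \<epsilon> = (\<lambda>s. of_int (sign s))"
  shows "gelfand_triple (wreath2 G) (diag_wreath2 G) (tensor_char \<xi> \<epsilon>)"
  unfolding gelfand_triple_def
proof (intro allI impI)
  have "linear_char (sym_group 2) \<epsilon>"
    using assms(4) linear_char_sign by (auto simp: linear_char_def)
  then interpret gelfand_trick "wreath2 G" "diag_wreath2 G" "tensor_char \<xi> \<epsilon>" "product_char \<xi>"
    "(\<one>\<^bsub>G\<^esub>, \<one>\<^bsub>G\<^esub>, swap12)"
    using gelfand_trick_wreath2 assms(1-3) by blast
  fix n \<rho> T1 T2
  assume "irred_rep (wreath2 G) n \<rho> \<and> intertwiner (wreath2 G) (diag_wreath2 G) (tensor_char \<xi> \<epsilon>) n \<rho> T1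
    \<and> intertwiner (wreath2 G) (diag_wreath2 G) (tensor_char \<xi> \<epsilon>) n \<rho> T2"
  then interpret gelfand_trick_irrep "wreath2 G" "diag_wreath2 G" "tensor_char \<xi> \<epsilon>" "product_char \<xi>"
    "(\<one>\<^bsub>G\<^esub>, \<one>\<^bsub>G\<^esub>, swap12)" n \<rho>
    by unfold_locales simp
  show "(\<exists>c. \<forall>v\<in>carrier_vec n. T1 v = (\<lambda>x. c * T2 v x)) \<or> (\<exists>c. \<forall>v\<in>carrier_vec n. T2 v = (\<lambda>x. c * T1 v x))"
    using intertwiners_dependent \<open>irred_rep _ _ _ \<and> _\<close> by blast
qed

end
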